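(* Let $f$ be as in the context. The $\mathrm{SL}(2,\mathbb{R})$-action $P\cdot(J,A)=(PJP^{-1},PA(P^{-1}\cdot)P^{-1})$ on $D^3(\mathcal{J}(\mathbb{R}^2))\setminus\{\text{zero section}\}\cong\mathcal{B}_0(T^2)$ is Hamiltonian with respect to $\boldsymbol{\omega}$, with moment map $\mu:\mathcal{B}_0(T^2)\to\mathfrak{sl}(2,\mathbb{R})^*$ given by $$\mu_{(J,A)}(X)=\big(1-f(\|A\|_0^2)\big)\,\mathrm{tr}(JX),\qquad X\in\mathfrak{sl}(2,\mathbb{R}).$$ That is: $\mu_{P\cdot(J,A)}=\mu_{(J,A)}\circ\mathrm{Ad}(P^{-1})$ for all $P\in\mathrm{SL}(2,\mathbb{R})$, and for every $X\in\mathfrak{sl}(2,\mathbb{R})$ the function $\mu^X(J,A)=\mu_{(J,A)}(X)$ satisfies $d\mu^X=\boldsymbol{\omega}(V_X,\cdot)$, where $V_X(p)=\frac{d}{dt}\big|_{t=0}\exp(tX)\cdot p$.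
   Context: $f:[0,+\infty)\to(-\infty,0]$ is smooth with $f'(t)<0$ for all $t\ge0$ and $\lim_{t\to+\infty}f(t)=-\infty$. $\mathfrak{sl}(2,\mathbb{R})$ is the space of traceless $2\times2$ real matrices. Let $\rho=dx_0\wedge dy_0$ on $\mathbb{R}^2$. $\mathcal{J}(\mathbb{R}^2)=\{J\in \mathrm{End}(\mathbb{R}^2): J^2=-\mathbb{1},\ \rho(v,Jv)>0 \text{ for some } v\neq 0\}$; $g_J(\cdot,\cdot):=\rho(\cdot,J\cdot)$. $T_J\mathcal{J}(\mathbb{R}^2)=\{\dot J: J\dot J+\dot JJ=0\}$, with $\langle \dot J,\dot J'\rangle_J=\tfrac12\mathrm{tr}(\dot J\dot J')$. $D^3(\mathcal{J}(\mathbb{R}^2))=\{(J,C)\in\mathcal{J}(\mathbb{R}^2)\times S_3(\mathbb{R}^2): C(J\cdot,J\cdot,J\cdot)=-C(J\cdot,\cdot,\cdot)\}$, $S_3(\mathbb{R}^2)$ the totally symmetric trilinear forms. Pick form $A=g_J^{-1}C$, i.e. $g_J(A(X)Y,Z)=C(X,Y,Z)$; identify $(J,C)$ with $(J,A)$; $A(P^{-1}\cdot)$ denotes pull-back of the form part. With a $g_J$-orthonormal basis $e_1,e_2$, $Je_1=e_2$, dual basis $e_i^*$, write $A=A_1e_1^*+A_2e_2^*$; $\langle A,B\rangle_J=\mathrm{tr}(A_1B_1+A_2B_2)$, $\|A\|_0^2=\tfrac14\langle A,A\rangle_J$, $A_{\mathrm{tr}}=\tfrac12\mathrm{tr}(A_1)\mathbb{1}e_1^*+\tfrac12\mathrm{tr}(A_2)\mathbb{1}e_2^*$,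 $A_0=A-A_{\mathrm{tr}}$; $(AJ)(X)=A(X)J$. Tangent vectors: $(\dot J,\dot A)$ with $\dot A=g_J^{-1}\dot C$. $\mathbf{g}_{(J,A)}((\dot J,\dot A),(\dot J',\dot A'))=(1-f(\|A\|_0^2))\langle\dot J,\dot J'\rangle_J+\tfrac{f'(\|A\|_0^2)}{3}\langle\dot A_0,\dot A'_0\rangle_J-\tfrac{f'(\|A\|_0^2)}{6}\langle\dot A_{\mathrm{tr}},\dot A'_{\mathrm{tr}}\rangle_J$; $\mathbf{I}_{(J,A)}(\dot J,\dot A)=(-J\dot J,-\dot AJ-A\dot J)$; $\boldsymbol{\omega}(\cdot,\cdot)=\mathbf{g}(\cdot,\mathbf{I}\cdot)$. $\mathcal{B}_0(T^2)$, the deformation space of properly convex $\mathbb{RP}^2$-structures on the torus, is identified with the complement of the zero section of $D^3(\mathcal{J}(\mathbb{R}^2))$. *)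

theory Defs
  imports "HOL-Analysis.Analysis"
begin

type_synonym mat2 = "real^2^2"
type_synonym ten3 = "real^2^2^2"  \<comment> \<open>coefficients C$i$j$k = C(b_i,b_j,b_k) in the standard basis\<close>

definition b :: "2 \<Rightarrow> real^2" where "b i = axis i 1"

definition rho :: "real^2 \<Rightarrow> real^2 \<Rightarrow> real" where
  "rho u v = u$1 * v$2 - u$2 * v$1"

definition gJ :: "mat2 \<Rightarrow> real^2 \<Rightarrow> real^2 \<Rightarrow> real" where
  "gJ J u v = rho u (J *v v)"

definition Jspace :: "mat2 set" where
  "Jspace = {J. J ** J = - mat 1 \<and> (\<exists>v. v \<noteq> 0 \<and> rho v (J *v v) > 0)}"

definition sl2 :: "mat2 set" where "sl2 = {X. trace X = 0}"
definition SL2 :: "mat2 set" where "SL2 = {P. det P = 1}"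

definition trilin :: "ten3 \<Rightarrow> real^2 \<Rightarrow> real^2 \<Rightarrow> real^2 \<Rightarrow> real" where
  "trilin C X Y Z = (\<Sum>i\<in>UNIV. \<Sum>j\<in>UNIV. \<Sum>k\<in>UNIV. C$i$j$k * X$i * Y$j * Z$k)"

definition totally_symmetric :: "ten3 \<Rightarrow> bool" where
  "totally_symmetric C \<longleftrightarrow> (\<forall>X Y Z. trilin C X Y Z = trilin C Y X Z \<and> trilin C X Y Z = trilin C X Z Y)"

definition D3 :: "(mat2 \<times> ten3) set" where
  "D3 = {(J, C). J \<in> Jspace \<and> totally_symmetric C \<and>
          (\<forall>X Y Z. trilin C (J *v X) (J *v Y) (J *v Z) = - trilin C (J *v X) Y Z)}"

text \<open>complement of the zero section, identified with B_0(T^2)\<close>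
definition B0 :: "(mat2 \<times> ten3) set" where
  "B0 = {(J, C). (J, C) \<in> D3 \<and> C \<noteq> 0}"

definition pickA :: "mat2 \<Rightarrow> ten3 \<Rightarrow> real^2 \<Rightarrow> mat2" where
  "pickA J C X = (THE M. \<forall>Y Z. gJ J (M *v Y) Z = trilin C X Y Z)"

text \<open>the g_J-orthonormal basis e1, e2 = J e1\<close>
definition e1 :: "mat2 \<Rightarrow> real^2" where
  "e1 J = (1 / sqrt (gJ J (b 1) (b 1))) *\<^sub>R b 1"
definition e2 :: "mat2 \<Rightarrow> real^2" where
  "e2 J = J *v e1 J"

definition ipJ :: "mat2 \<Rightarrow> mat2 \<Rightarrow> real" where
  "ipJ Jd Jd' = trace (Jd ** Jd') / 2"

definition ipA :: "mat2 \<Rightarrow> (real^2 \<Rightarrow> mat2) \<Rightarrow> (real^2 \<Rightarrow> mat2) \<Rightarrow> real" where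
  "ipA J A B' = trace (A (e1 J) ** B' (e1 J)) + trace (A (e2 J) ** B' (e2 J))"

definition norm0sq :: "mat2 \<Rightarrow> (real^2 \<Rightarrow> mat2) \<Rightarrow> real" where
  "norm0sq J A = ipA J A A / 4"

text \<open>A_tr = 1/2 tr(A_1) 1 e1* + 1/2 tr(A_2) 1 e2*, i.e. X |-> 1/2 tr(A(X)) 1\<close>
definition Atr :: "(real^2 \<Rightarrow> mat2) \<Rightarrow> real^2 \<Rightarrow> mat2" where
  "Atr A X = (trace (A X) / 2) *\<^sub>R mat 1"
definition A0 :: "(real^2 \<Rightarrow> mat2) \<Rightarrow> real^2 \<Rightarrow> mat2" where
  "A0 A X = A X - Atr A X"

text \<open>metric g at (J,A) on tangent vectors written as (Jdot, Adot) with Adot a form\<close>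
definition gmet :: "(real \<Rightarrow> real) \<Rightarrow> (real \<Rightarrow> real) \<Rightarrow> mat2 \<Rightarrow> (real^2 \<Rightarrow> mat2)
   \<Rightarrow> mat2 \<times> (real^2 \<Rightarrow> mat2) \<Rightarrow> mat2 \<times> (real^2 \<Rightarrow> mat2) \<Rightarrow> real" where
  "gmet f f' J A u w =
     (let n = norm0sq J A in
       (1 - f n) * ipJ (fst u) (fst w)
       + f' n / 3 * ipA J (A0 (snd u)) (A0 (snd w))
       - f' n / 6 * ipA J (Atr (snd u)) (Atr (snd w)))"

definition Icx :: "mat2 \<Rightarrow> (real^2 \<Rightarrow> mat2) \<Rightarrow> mat2 \<times> (real^2 \<Rightarrow> mat2) \<Rightarrow> mat2 \<times> (real^2 \<Rightarrow> mat2)" where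
  "Icx J A u = (- (J ** fst u), \<lambda>X. - (snd u X ** J) - (A X ** fst u))"

text \<open>omega at the point (J,C) on tangent vectors (Jdot,Cdot), with Adot = g_J^{-1} Cdot\<close>
definition omega :: "(real \<Rightarrow> real) \<Rightarrow> (real \<Rightarrow> real) \<Rightarrow> mat2 \<times> ten3
   \<Rightarrow> mat2 \<times> ten3 \<Rightarrow> mat2 \<times> ten3 \<Rightarrow> real" where
  "omega f f' p u w =
     (let J = fst p; A = pickA J (snd p) in
       gmet f f' J A (fst u, pickA J (snd u)) (Icx J A (fst w, pickA J (snd w))))"

text \<open>SL(2,R)-action P.(J,A) = (P J P^-1, P A(P^-1 .) P^-1), expressed back in C = g_J A\<close>
definition act :: "mat2 \<Rightarrow> mat2 \<times> ten3 \<Rightarrow> mat2 \<times> ten3" where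
  "act P p =
     (let J = fst p; A = pickA J (snd p); Pi = matrix_inv P;
          J' = P ** J ** Pi;
          A' = (\<lambda>X. P ** A (Pi *v X) ** Pi)
      in (J', \<chi> i j k. gJ J' (A' (b i) *v b j) (b k)))"

definition mu :: "(real \<Rightarrow> real) \<Rightarrow> mat2 \<times> ten3 \<Rightarrow> mat2 \<Rightarrow> real" where
  "mu f p X = (let J = fst p; A = pickA J (snd p) in (1 - f (norm0sq J A)) * trace (J ** X))"

fun matpow :: "mat2 \<Rightarrow> nat \<Rightarrow> mat2" where
  "matpow X 0 = mat 1"
| "matpow X (Suc n) = X ** matpow X n"

definition mexp :: "mat2 \<Rightarrow> mat2" where
  "mexp X = (\<Sum>n. (1 / fact n) *\<^sub>R matpow X n)"

end

theory Submission
  imports Defs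
begin

text \<open>
  On B0 everything is explicit in the standard basis: J = [[a, -(1+a^2)/c], [c, -a]] with c > 0,
  and C is determined by C111 and C112 (total symmetry plus the compatibility with J). The pick form
  g_J^{-1} C then has an explicit matrix and its norm is ||A||_0^2 = (C111^2 + (a C111 + c C112)^2) / c^3.

  Equivariance: this norm is SL(2)-invariant because C(w,w,w)^2 + C(Jw,Jw,Jw)^2 = ||A||_0^2 rho(w,Jw)^3
  for every w, while tr(P J P^{-1} X) = tr(J P^{-1} X P).

  Moment map equation: the fundamental field of X is ([X,J], -C(X.,.,.) - C(.,X.,.) - C(.,.,X.)).
  The J-part of omega(V_X, v) is (1 - f) tr(Jd X), using J^2 = -1 and J Jd = -Jd J; the A-part is
  -f' d(||A||_0^2)(v) tr(JX), a polynomial identity once the equations of B0 and their linearizations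
  along v eliminate the dependent coordinates.
\<close>

lemma b_nth [simp]: "b 1 $ 1 = 1" "b 1 $ 2 = 0" "b 2 $ 1 = 0" "b 2 $ 2 = 1"
  by (simp_all add: b_def axis_def)

lemma trilin_b: "trilin C (b i) (b j) (b k) = C$i$j$k"
  using exhaust_2[of i] exhaust_2[of j] exhaust_2[of k]
  by (auto simp: trilin_def sum_2)

lemma rho_matrix_vector_mult: "rho (P *v u) (P *v w) = det P * rho u w"
  by (simp add: rho_def matrix_vector_mult_def sum_2 det_2 algebra_simps)

definition adj2 :: "mat2 \<Rightarrow> mat2" where
  "adj2 P = (\<chi> i j. if i = 1 then (if j = 1 then P$2$2 else - P$1$2) else (if j = 1 then - P$2$1 else P$1$1))"

lemma adj2_nth [simp]:
  "adj2 P $ 1 $ 1 = P$2$2" "adj2 P $ 1 $ 2 = - P$1$2" "adj2 P $ 2 $ 1 = - P$2$1" "adj2 P $ 2 $ 2 = P$1$1"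
  by (simp_all add: adj2_def)

lemma matrix_inv_unique:
  fixes P Q :: "real^'n^'n"
  assumes "P ** Q = mat 1" "Q ** P = mat 1"
  shows "matrix_inv P = Q"
proof -
  have inv: "P ** matrix_inv P = mat 1 \<and> matrix_inv P ** P = mat 1"
    unfolding matrix_inv_def using assms by (intro someI_ex[of "\<lambda>M. P ** M = mat 1 \<and> M ** P = mat 1"]) blast
  have "matrix_inv P = matrix_inv P ** (P ** Q)"
    using assms by (simp add: matrix_mul_rid)
  also have "\<dots> = Q"
    using inv by (simp add: matrix_mul_assoc matrix_mul_lid)
  finally show ?thesis .
qed

lemma matrix_inv_2:
  fixes P :: mat2
  assumes "det P \<noteq> 0"
  shows "matrix_inv P = (1 / det P) *\<^sub>R adj2 P"
proof (rule matrix_inv_unique)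
  show "P ** ((1 / det P) *\<^sub>R adj2 P) = mat 1"
    using assms by (simp add: vec_eq_iff forall_2 matrix_matrix_mult_def sum_2 mat_def field_simps)
      (simp_all add: det_2 algebra_simps)
  then show "((1 / det P) *\<^sub>R adj2 P) ** P = mat 1"
    using matrix_left_right_inverse by blast
qed

lemma Jspace_entries:
  assumes "J \<in> Jspace"
  shows "J$2$2 = - J$1$1" "J$1$1 ^ 2 + J$1$2 * J$2$1 = -1" "J$2$1 > 0"
proof -
  have JJ: "J ** J = - mat 1" using assms by (simp add: Jspace_def)
  have q11: "J$1$1 * J$1$1 + J$1$2 * J$2$1 = -1"
    using arg_cong[OF JJ, of "\<lambda>M. M$1$1"] by (simp add: matrix_matrix_mult_def sum_2 mat_def)
  have q12: "J$1$2 * (J$1$1 + J$2$2) = 0"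
    using arg_cong[OF JJ, of "\<lambda>M. M$1$2"] by (simp add: matrix_matrix_mult_def sum_2 mat_def algebra_simps)
  have q21: "J$2$1 * (J$1$1 + J$2$2) = 0"
    using arg_cong[OF JJ, of "\<lambda>M. M$2$1"] by (simp add: matrix_matrix_mult_def sum_2 mat_def algebra_simps)
  show tr: "J$2$2 = - J$1$1"
  proof (rule ccontr)
    assume "J$2$2 \<noteq> - J$1$1"
    then have "J$1$1 * J$1$1 = -1" using q11 q12 q21 by auto
    moreover have "J$1$1 * J$1$1 \<ge> 0" by simp
    ultimately show False by linarith
  qed
  show sq: "J$1$1 ^ 2 + J$1$2 * J$2$1 = -1" using q11 by (simp add: power2_eq_square)
  obtain v where v: "rho v (J *v v) > 0" using assms by (auto simp: Jspace_def)
  \<comment> \<open>completing the square in the quadratic form w \<mapsto> rho w (J w)\<close>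
  have "J$2$1 * rho v (J *v v) = (J$2$1 * v$1 - J$1$1 * v$2)^2 + (v$2)^2"
    using tr sq by (simp add: rho_def matrix_vector_mult_def sum_2) algebra
  moreover have "J$2$1 * v$1 - J$1$1 * v$2 \<noteq> 0 \<or> v$2 \<noteq> 0"
    using v tr by (auto simp: rho_def matrix_vector_mult_def sum_2)
  ultimately have "J$2$1 * rho v (J *v v) > 0"
    by (simp add: sum_power2_gt_zero_iff)
  then show "J$2$1 > 0"
    using v zero_less_mult_pos2 by blast
qed

section \<open>The pick form\<close>

definition gram :: "mat2 \<Rightarrow> mat2" where
  "gram J = (\<chi> i j. gJ J (b i) (b j))"

text \<open>transpose (adj2 (gram J)) is det J times the inverse transpose of the Gram matrix of g_J.\<close>
definition pick :: "mat2 \<Rightarrow> ten3 \<Rightarrow> real^2 \<Rightarrow> mat2" where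
  "pick J C X = transpose (adj2 (gram J)) ** (\<chi> j k. \<Sum>i\<in>UNIV. C$i$k$j * X$i)"

lemma gram_nth [simp]:
  "gram J $ 1 $ 1 = J$2$1" "gram J $ 1 $ 2 = J$2$2" "gram J $ 2 $ 1 = - J$1$1" "gram J $ 2 $ 2 = - J$1$2"
  by (simp_all add: gram_def gJ_def rho_def matrix_vector_mult_def sum_2)

lemma gJ_pick: "gJ J (pick J C X *v Y) Z = det J * trilin C X Y Z"
  by (simp add: pick_def gJ_def rho_def trilin_def transpose_def det_2
      matrix_matrix_mult_def matrix_vector_mult_def sum_2 algebra_simps)

lemma gJ_left_cancel:
  assumes "det J \<noteq> 0" and "\<And>Z. gJ J u Z = gJ J w Z"
  shows "u = w"
proof -
  have k: "(u$1 - w$1) * J$2$k - (u$2 - w$2) * J$1$k = 0" for k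
    using assms(2)[of "b k"] exhaust_2[of k]
    by (auto simp: gJ_def rho_def matrix_vector_mult_def sum_2 algebra_simps)
  have "(u$1 - w$1) * det J = 0" "(u$2 - w$2) * det J = 0"
    unfolding det_2 using k[of 1] k[of 2] by algebra+
  then show ?thesis
    using assms(1) by (simp add: vec_eq_iff forall_2)
qed

lemma pickA_eq_pick:
  assumes "det J = 1"
  shows "pickA J C = pick J C"
proof
  fix X
  show "pickA J C X = pick J C X"
    unfolding pickA_def
  proof (rule the_equality)
    show "\<forall>Y Z. gJ J (pick J C X *v Y) Z = trilin C X Y Z"
      using assms by (simp add: gJ_pick)
    fix M assume "\<forall>Y Z. gJ J (M *v Y) Z = trilin C X Y Z"
    then have "M *v Y = pick J C X *v Y" for Y
      using assms by (intro gJ_left_cancel[of J]) (simp_all add: gJ_pick)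
    then show "M = pick J C X" by (metis matrix_eq)
  qed
qed

section \<open>Coordinates on B0\<close>

lemma B0_entries:
  assumes "(J, C) \<in> B0"
  shows "J$2$2 = - J$1$1" "J$1$1 ^ 2 + J$1$2 * J$2$1 = -1" "J$2$1 > 0"
    "C$1$2$1 = C$1$1$2" "C$2$1$1 = C$1$1$2" "C$2$1$2 = C$1$2$2" "C$2$2$1 = C$1$2$2"
    "J$2$1 * C$1$2$2 = J$1$2 * C$1$1$1 - 2 * J$1$1 * C$1$1$2"
    "J$2$1 * C$2$2$2 = J$1$2 * C$1$1$2 - 2 * J$1$1 * C$1$2$2"
    "C \<noteq> 0"
proof -
  have JS: "J \<in> Jspace" and symm: "totally_symmetric C" and C0: "C \<noteq> 0"
    and compat: "\<And>X Y Z. trilin C (J *v X) (J *v Y) (J *v Z) = - trilin C (J *v X) Y Z"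
    using assms by (auto simp: B0_def D3_def)
  show J22: "J$2$2 = - J$1$1" and sq: "J$1$1 ^ 2 + J$1$2 * J$2$1 = -1" and pos: "J$2$1 > 0"
    using Jspace_entries[OF JS] by auto
  show "C \<noteq> 0" by (fact C0)
  have swap: "trilin C X Y Z = trilin C Y X Z" "trilin C X Y Z = trilin C X Z Y" for X Y Z
    using symm by (auto simp: totally_symmetric_def)
  show c121: "C$1$2$1 = C$1$1$2" using swap(2)[of "b 1" "b 1" "b 2"] by (simp add: trilin_b)
  show c211: "C$2$1$1 = C$1$1$2" using swap(1)[of "b 1" "b 2" "b 1"] c121 by (simp add: trilin_b)
  show c212: "C$2$1$2 = C$1$2$2" using swap(1)[of "b 1" "b 2" "b 2"] by (simp add: trilin_b)
  show c221: "C$2$2$1 = C$1$2$2" using swap(2)[of "b 2" "b 1" "b 2"] c212 by (simp add: trilin_b)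
  let ?L1 = "J$2$1 * C$1$2$2 - J$1$2 * C$1$1$1 + 2 * J$1$1 * C$1$1$2"
  let ?L2 = "J$2$1 * C$2$2$2 - J$1$2 * C$1$1$2 + 2 * J$1$1 * C$1$2$2"
  have h: "trilin C (J *v b k) (J *v b 1) (J *v b 1) + trilin C (J *v b k) (b 1) (b 1) = 0" for k
    using compat by simp
  have h1: "J$1$1 * ?L1 + J$2$1 * ?L2 = 0" and h2: "J$1$2 * ?L1 - J$1$1 * ?L2 = 0"
  proof -
    have "J$2$1 * (J$1$1 * ?L1 + J$2$1 * ?L2) = 0" "J$2$1 * (J$1$2 * ?L1 - J$1$1 * ?L2) = 0"
      using h[of 1] h[of 2] sq J22 c121 c211 c212 c221
      by (simp_all add: trilin_def sum_2 matrix_vector_mult_def) algebra+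
    then show "J$1$1 * ?L1 + J$2$1 * ?L2 = 0" "J$1$2 * ?L1 - J$1$1 * ?L2 = 0"
      using pos by simp_all
  qed
  have "?L1 = 0" "?L2 = 0"
    using h1 h2 sq by algebra+
  then show "J$2$1 * C$1$2$2 = J$1$2 * C$1$1$1 - 2 * J$1$1 * C$1$1$2"
    "J$2$1 * C$2$2$2 = J$1$2 * C$1$1$2 - 2 * J$1$1 * C$1$2$2"
    by simp_all
qed

lemma B0_entries_solved:
  assumes "(J, C) \<in> B0"
  defines "e \<equiv> 1 / J$2$1"
  shows "J$2$1 * e = 1" "J$1$2 = -(1 + (J$1$1)^2) * e"
    "C$1$2$2 = -((J$1$1)^2 + 1) * C$1$1$1 * e^2 - 2 * J$1$1 * C$1$1$2 * e"
    "C$2$2$2 = (3 * (J$1$1)^2 - 1) * C$1$1$2 * e^2 + (2 * (J$1$1)^3 + 2 * J$1$1) * C$1$1$1 * e^3"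
proof -
  note B = B0_entries[OF assms(1)]
  show ce: "J$2$1 * e = 1" using B(3) by (simp add: e_def)
  show J12: "J$1$2 = -(1 + (J$1$1)^2) * e"
    using ce B(2) by algebra
  show C122: "C$1$2$2 = -((J$1$1)^2 + 1) * C$1$1$1 * e^2 - 2 * J$1$1 * C$1$1$2 * e"
    using ce B(8) J12 by algebra
  show "C$2$2$2 = (3 * (J$1$1)^2 - 1) * C$1$1$2 * e^2 + (2 * (J$1$1)^3 + 2 * J$1$1) * C$1$1$1 * e^3"
    using ce B(9) J12 C122 by algebra
qed

lemma B0_det: "(J, C) \<in> B0 \<Longrightarrow> det J = 1"
  using B0_entries(1,2)[of J C] by (simp add: det_2 power2_eq_square)

text \<open>The value of C(e1,e1,e1)^2 + C(e2,e2,e2)^2 in the g_J-orthonormal frame e1 = b1 / sqrt(J21),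
  e2 = J e1.\<close>
definition normA :: "mat2 \<Rightarrow> ten3 \<Rightarrow> real" where
  "normA J C = ((C$1$1$1)^2 + (J$1$1 * C$1$1$1 + J$2$1 * C$1$1$2)^2) / (J$2$1)^3"

lemma ipA_homogeneous:
  assumes "\<And>r Y. A (r *\<^sub>R Y) = r *\<^sub>R A Y" "\<And>r Y. B (r *\<^sub>R Y) = r *\<^sub>R B Y" and "J$2$1 > 0"
  shows "ipA J A B = (trace (A (b 1) ** B (b 1)) + trace (A (J *v b 1) ** B (J *v b 1))) / J$2$1"
proof -
  define s where "s = 1 / sqrt (J$2$1)"
  have e1: "e1 J = s *\<^sub>R b 1"
    by (simp add: e1_def s_def gJ_def rho_def matrix_vector_mult_def sum_2)
  have e2: "e2 J = s *\<^sub>R (J *v b 1)"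
    by (simp add: e2_def e1 matrix_vector_mult_scaleR)
  have "trace ((s *\<^sub>R M) ** (s *\<^sub>R N)) = trace (M ** N) / J$2$1" for M N :: mat2
    using assms(3) by (simp add: s_def trace_def matrix_matrix_mult_def sum_2 field_simps)
  then show ?thesis
    unfolding ipA_def e1 e2 assms(1,2) by (simp add: add_divide_distrib)
qed

lemma pick_scaleR: "pick J C (r *\<^sub>R Y) = r *\<^sub>R pick J C Y"
  by (simp add: pick_def vec_eq_iff matrix_matrix_mult_def sum_2 algebra_simps)

lemma norm0sq_pickA:
  assumes "(J, C) \<in> B0"
  shows "norm0sq J (pickA J C) = normA J C"
proof -
  define e where "e = 1 / J$2$1"
  note B = B0_entries[OF assms] and S = B0_entries_solved[OF assms, folded e_def]
  have div: "t / J$2$1 = t * e" "t / (J$2$1)^3 = t * e^3" for t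
    using B(3) by (simp_all add: e_def field_simps)
  have "norm0sq J (pickA J C) = (trace (pick J C (b 1) ** pick J C (b 1))
      + trace (pick J C (J *v b 1) ** pick J C (J *v b 1))) / J$2$1 / 4"
    unfolding norm0sq_def pickA_eq_pick[OF B0_det[OF assms]]
    by (simp add: ipA_homogeneous[OF pick_scaleR pick_scaleR B(3)])
  also have "\<dots> = normA J C"
    unfolding normA_def
    apply (simp only: pick_def gram_nth transpose_def adj2_nth vec_lambda_beta
        sum_2 b_nth matrix_matrix_mult_def matrix_vector_mult_def trace_def B(1,4-7) S(2-4) div)
    using S(1) by algebra
  finally show ?thesis .
qed

lemma normA_pos:
  assumes "(J, C) \<in> B0"
  shows "normA J C > 0"
proof -
  note B = B0_entries[OF assms] and S = B0_entries_solved[OF assms]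
  have "C$1$1$1 \<noteq> 0 \<or> J$1$1 * C$1$1$1 + J$2$1 * C$1$1$2 \<noteq> 0"
  proof (rule ccontr)
    assume "\<not> ?thesis"
    then have "C$1$1$1 = 0" "C$1$1$2 = 0"
      using B(3) by auto
    then have "C = 0"
      using B(4-7) S(3,4) by (simp add: vec_eq_iff forall_2)
    then show False using B(10) by simp
  qed
  then show ?thesis
    unfolding normA_def using B(3) by (simp add: sum_power2_gt_zero_iff)
qed

lemma normA_cubic_identity:
  assumes "(J, C) \<in> B0"
  shows "(trilin C w w w)^2 + (trilin C (J *v w) (J *v w) (J *v w))^2 = normA J C * (rho w (J *v w))^3"
proof -
  define e where "e = 1 / J$2$1"
  note B = B0_entries[OF assms] and S = B0_entries_solved[OF assms, folded e_def]
  have div: "t / (J$2$1)^3 = t * e^3" for t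
    using B(3) by (simp add: e_def field_simps)
  show ?thesis
    unfolding normA_def
    apply (simp only: trilin_def rho_def vec_lambda_beta sum_2 matrix_vector_mult_def B(1,4-7) S(2-4) div)
    using S(1) by algebra
qed

section \<open>Equivariance\<close>

definition pullback :: "ten3 \<Rightarrow> mat2 \<Rightarrow> ten3" where
  "pullback C Q = (\<chi> i j k. trilin C (Q *v b i) (Q *v b j) (Q *v b k))"

lemma trilin_pullback: "trilin (pullback C Q) X Y Z = trilin C (Q *v X) (Q *v Y) (Q *v Z)"
  unfolding pullback_def trilin_def
  by (simp add: sum_2 matrix_vector_mult_def) algebra

lemma act_eq:
  assumes "det J = 1"
  shows "act P (J, C) = (P ** J ** matrix_inv P, det P *\<^sub>R pullback C (matrix_inv P))"
proof -
  define Q where "Q = matrix_inv P"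
  have "gJ (P ** J ** Q) ((P ** pick J C (Q *v b i) ** Q) *v b j) (b k)
      = det P * trilin C (Q *v b i) (Q *v b j) (Q *v b k)" for i j k
  proof -
    have "gJ (P ** J ** Q) ((P ** pick J C (Q *v b i) ** Q) *v b j) (b k)
        = rho (P *v (pick J C (Q *v b i) *v (Q *v b j))) (P *v (J *v (Q *v b k)))"
      unfolding gJ_def by (simp add: matrix_vector_mul_assoc[symmetric])
    also have "\<dots> = det P * gJ J (pick J C (Q *v b i) *v (Q *v b j)) (Q *v b k)"
      unfolding rho_matrix_vector_mult gJ_def ..
    also have "\<dots> = det P * trilin C (Q *v b i) (Q *v b j) (Q *v b k)"
      unfolding gJ_pick assms by simp
    finally show ?thesis .
  qed
  then show ?thesis
    by (simp add: act_def Let_def pickA_eq_pick[OF assms] Q_def[symmetric] pullback_def vec_eq_iff)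
qed

lemma mu_B0:
  assumes "(J, C) \<in> B0"
  shows "mu f (J, C) X = (1 - f (normA J C)) * trace (J ** X)"
  using assms by (simp add: mu_def norm0sq_pickA)

lemma conj_in_B0:
  assumes B: "(J, C) \<in> B0" and inv: "P ** Q = mat 1" "Q ** P = mat 1" and pos: "det P > 0"
  shows "(P ** J ** Q, pullback C Q) \<in> B0"
proof -
  have QPv: "Q *v (P *v y) = y" for y
    using inv by (simp add: matrix_vector_mul_assoc)
  have J'v: "(P ** J ** Q) *v y = P *v (J *v (Q *v y))" for y
    by (simp add: matrix_vector_mul_assoc[symmetric])
  have JS: "J \<in> Jspace" and symm: "totally_symmetric C" and C0: "C \<noteq> 0"
    and compat: "\<And>X Y Z. trilin C (J *v X) (J *v Y) (J *v Z) = - trilin C (J *v X) Y Z"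
    using B by (auto simp: B0_def D3_def)
  have "(P ** J ** Q) ** (P ** J ** Q) = P ** J ** (Q ** P) ** J ** Q"
    by (simp add: matrix_mul_assoc)
  also have "\<dots> = P ** (J ** J) ** Q"
    unfolding inv(2) by (simp add: matrix_mul_assoc matrix_mul_rid)
  also have "\<dots> = - (P ** Q)"
    using JS by (simp add: Jspace_def vec_eq_iff matrix_matrix_mult_def mat_def sum_2 algebra_simps)
  finally have J'J': "(P ** J ** Q) ** (P ** J ** Q) = - mat 1"
    unfolding inv(1) .
  obtain v where v: "v \<noteq> 0" "rho v (J *v v) > 0"
    using JS by (auto simp: Jspace_def)
  have "P ** J ** Q \<in> Jspace"
    unfolding Jspace_def
  proof (intro CollectI conjI exI)
    show "P *v v \<noteq> 0" using v(1) QPv[of v] by auto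
    show "rho (P *v v) ((P ** J ** Q) *v (P *v v)) > 0"
      unfolding J'v QPv rho_matrix_vector_mult using v(2) pos by simp
  qed (fact J'J')
  moreover have "totally_symmetric (pullback C Q)"
    using symm unfolding totally_symmetric_def trilin_pullback by metis
  moreover have "trilin (pullback C Q) ((P ** J ** Q) *v X) ((P ** J ** Q) *v Y) ((P ** J ** Q) *v Z)
      = - trilin (pullback C Q) ((P ** J ** Q) *v X) Y Z" for X Y Z
    unfolding trilin_pullback J'v QPv using compat by simp
  moreover have "pullback C Q \<noteq> 0"
  proof
    assume "pullback C Q = 0"
    then have "trilin (pullback C Q) (P *v b i) (P *v b j) (P *v b k) = 0" for i j k
      by (simp add: trilin_def)
    then have "C = 0"
      unfolding trilin_pullback QPv trilin_b by (simp add: vec_eq_iff)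
    then show False using C0 by simp
  qed
  ultimately show ?thesis
    by (simp add: B0_def D3_def)
qed

lemma normA_conj:
  assumes B: "(J, C) \<in> B0" and inv: "P ** Q = mat 1" "Q ** P = mat 1" and det: "det P = 1"
  shows "normA (P ** J ** Q) (pullback C Q) = normA J C"
proof -
  have B': "(P ** J ** Q, pullback C Q) \<in> B0"
    using conj_in_B0[OF assms(1-3)] det by simp
  have QPv: "Q *v (P *v y) = y" and PQv: "P *v (Q *v y) = y" for y
    using inv by (simp_all add: matrix_vector_mul_assoc)
  have J'v: "(P ** J ** Q) *v y = P *v (J *v (Q *v y))" for y
    by (simp add: matrix_vector_mul_assoc[symmetric])
  let ?w = "Q *v b 1"
  have "rho (b 1) ((P ** J ** Q) *v b 1) = rho ?w (J *v ?w)"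
    unfolding J'v using rho_matrix_vector_mult[of P ?w "J *v ?w"] det PQv by simp
  moreover have "rho (b 1) ((P ** J ** Q) *v b 1) > 0"
    using B0_entries(3)[OF B'] by (simp add: rho_def matrix_vector_mult_def sum_2)
  moreover have "normA (P ** J ** Q) (pullback C Q) * (rho (b 1) ((P ** J ** Q) *v b 1))^3
      = normA J C * (rho ?w (J *v ?w))^3"
    using normA_cubic_identity[OF B', of "b 1"] normA_cubic_identity[OF B, of ?w]
    unfolding trilin_pullback J'v QPv by simp
  ultimately show ?thesis by simp
qed

lemma mu_equivariant:
  assumes P: "P \<in> SL2" and B: "p \<in> B0"
  shows "act P p \<in> B0 \<and> (\<forall>X \<in> sl2. mu f (act P p) X = mu f p (matrix_inv P ** X ** P))"
proof -
  obtain J C where p: "p = (J, C)" by (cases p)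
  have B: "(J, C) \<in> B0" using B p by simp
  have det: "det P = 1" using P by (simp add: SL2_def)
  define Q where "Q = adj2 P"
  have Q: "matrix_inv P = Q" using matrix_inv_2[of P] det by (simp add: Q_def)
  have inv: "P ** Q = mat 1" "Q ** P = mat 1"
    using det by (simp_all add: Q_def vec_eq_iff forall_2 matrix_matrix_mult_def sum_2 mat_def det_2 algebra_simps)
  have act: "act P p = (P ** J ** Q, pullback C Q)"
    using act_eq[OF B0_det[OF B]] by (simp add: p Q det)
  have B': "act P p \<in> B0"
    unfolding act using conj_in_B0[OF B inv] det by simp
  have "trace (P ** J ** Q ** X) = trace (J ** (Q ** X ** P))" for X
    by (simp add: trace_def matrix_matrix_mult_def sum_2 algebra_simps)
  then have "mu f (act P p) X = mu f p (matrix_inv P ** X ** P)" for X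
    using B' unfolding act by (simp add: mu_B0 B p Q normA_conj[OF B inv det])
  then show ?thesis using B' by simp
qed

section \<open>The fundamental vector field\<close>

lemma has_vector_derivative_vec:
  fixes f :: "real \<Rightarrow> 'a::real_normed_vector ^ 'n"
  assumes "\<And>i. ((\<lambda>t. f t $ i) has_vector_derivative v $ i) F"
  shows "(f has_vector_derivative v) F"
proof -
  let ?L = "Lim F (\<lambda>x. x)"
  have "((\<lambda>y. ((f y - f ?L) - (y - ?L) *\<^sub>R v) /\<^sub>R norm (y - ?L)) \<longlongrightarrow> 0) F"
  proof (rule vec_tendstoI)
    fix i
    from assms[of i] have "((\<lambda>y. ((f y $ i - f ?L $ i) - (y - ?L) *\<^sub>R v $ i) /\<^sub>R norm (y - ?L)) \<longlongrightarrow> 0) F"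
      unfolding has_vector_derivative_def has_derivative_def by simp
    then show "((\<lambda>y. (((f y - f ?L) - (y - ?L) *\<^sub>R v) /\<^sub>R norm (y - ?L)) $ i) \<longlongrightarrow> 0 $ i) F"
      by simp
  qed
  then show ?thesis
    unfolding has_vector_derivative_def has_derivative_def by (simp add: bounded_linear_scaleR_left)
qed

lemma has_vector_derivative_nth:
  "(f has_vector_derivative v) F \<Longrightarrow> ((\<lambda>t. f t $ i) has_vector_derivative v $ i) F"
  using bounded_linear.has_vector_derivative[OF bounded_linear_vec_nth] by blast

lemma has_real_derivative_mat_nth:
  fixes M :: "real \<Rightarrow> mat2"
  assumes "(M has_vector_derivative D) F"
  shows "((\<lambda>t. M t $ i $ j) has_real_derivative D $ i $ j) F"
  unfolding has_real_derivative_iff_has_vector_derivative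
  by (intro has_vector_derivative_nth assms)

lemma has_vector_derivative_matI:
  fixes M :: "real \<Rightarrow> mat2"
  assumes "\<And>i j. ((\<lambda>t. M t $ i $ j) has_real_derivative D $ i $ j) F"
  shows "(M has_vector_derivative D) F"
  using assms unfolding has_real_derivative_iff_has_vector_derivative
  by (intro has_vector_derivative_vec)

lemma has_vector_derivative_tenI:
  fixes T :: "real \<Rightarrow> ten3"
  assumes "\<And>i j k. ((\<lambda>t. T t $ i $ j $ k) has_real_derivative D $ i $ j $ k) F"
  shows "(T has_vector_derivative D) F"
  using assms unfolding has_real_derivative_iff_has_vector_derivative
  by (intro has_vector_derivative_vec)

lemma has_real_derivative_ten_nth:
  fixes T :: "real \<Rightarrow> ten3"
  assumes "(T has_vector_derivative D) F"
  shows "((\<lambda>t. T t $ i $ j $ k) has_real_derivative D $ i $ j $ k) F"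
  unfolding has_real_derivative_iff_has_vector_derivative
  by (intro has_vector_derivative_nth assms)

lemma has_real_derivative_fst_nth:
  "(\<gamma> has_vector_derivative (Jd, Cd)) F \<Longrightarrow> ((\<lambda>t. fst (\<gamma> t) $ i $ j) has_real_derivative Jd $ i $ j) F"
  for \<gamma> :: "real \<Rightarrow> mat2 \<times> ten3"
  using has_real_derivative_mat_nth[OF bounded_linear.has_vector_derivative[OF bounded_linear_fst]] by fastforce

lemma has_real_derivative_snd_nth:
  "(\<gamma> has_vector_derivative (Jd, Cd)) F \<Longrightarrow> ((\<lambda>t. snd (\<gamma> t) $ i $ j $ k) has_real_derivative Cd $ i $ j $ k) F"
  for \<gamma> :: "real \<Rightarrow> mat2 \<times> ten3"
  using has_real_derivative_ten_nth[OF bounded_linear.has_vector_derivative[OF bounded_linear_snd]] by fastforce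

lemma matpow_scaleR: "matpow (t *\<^sub>R X) n = t^n *\<^sub>R matpow X n"
  by (induction n) (auto simp: vec_eq_iff matrix_matrix_mult_def sum_distrib_left algebra_simps)

lemma matpow_nth_bound:
  "\<bar>matpow X n $ i $ j\<bar> \<le> (\<bar>X$1$1\<bar> + \<bar>X$1$2\<bar> + \<bar>X$2$1\<bar> + \<bar>X$2$2\<bar>) ^ n"
proof (induction n arbitrary: i j)
  case 0
  then show ?case by (simp add: mat_def)
next
  case (Suc n)
  let ?K = "\<bar>X$1$1\<bar> + \<bar>X$1$2\<bar> + \<bar>X$2$1\<bar> + \<bar>X$2$2\<bar>"
  have row: "\<bar>X$i$1\<bar> + \<bar>X$i$2\<bar> \<le> ?K" using exhaust_2[of i] by auto
  have "\<bar>matpow X (Suc n) $ i $ j\<bar> = \<bar>X$i$1 * matpow X n $ 1 $ j + X$i$2 * matpow X n $ 2 $ j\<bar>"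
    by (simp add: matrix_matrix_mult_def sum_2)
  also have "\<dots> \<le> \<bar>X$i$1\<bar> * \<bar>matpow X n $ 1 $ j\<bar> + \<bar>X$i$2\<bar> * \<bar>matpow X n $ 2 $ j\<bar>"
    using abs_triangle_ineq[of "X$i$1 * matpow X n $ 1 $ j" "X$i$2 * matpow X n $ 2 $ j"] by (simp add: abs_mult)
  also have "\<dots> \<le> \<bar>X$i$1\<bar> * ?K^n + \<bar>X$i$2\<bar> * ?K^n"
    by (intro add_mono mult_left_mono Suc.IH) auto
  also have "\<dots> = (\<bar>X$i$1\<bar> + \<bar>X$i$2\<bar>) * ?K^n" by (simp add: algebra_simps)
  also have "\<dots> \<le> ?K * ?K^n" by (rule mult_right_mono[OF row]) simp
  finally show ?case by simp
qed

lemma norm_mat2_le: "norm (M::mat2) \<le> \<bar>M$1$1\<bar> + \<bar>M$1$2\<bar> + \<bar>M$2$1\<bar> + \<bar>M$2$2\<bar>"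
proof -
  have "norm M \<le> norm (M$1) + norm (M$2)"
    unfolding norm_vec_def[of M] using L2_set_le_sum[of UNIV "\<lambda>i. norm (M$i)"] by (simp add: sum_2)
  also have "\<dots> \<le> (\<bar>M$1$1\<bar> + \<bar>M$1$2\<bar>) + (\<bar>M$2$1\<bar> + \<bar>M$2$2\<bar>)"
    using norm_le_l1_cart[of "M$1"] norm_le_l1_cart[of "M$2"] by (simp add: sum_2)
  finally show ?thesis by simp
qed

lemma mexp_scaleR_nth: "mexp (t *\<^sub>R X) $ i $ j = (\<Sum>n. (matpow X n $ i $ j / fact n) * t^n)"
proof -
  let ?K = "\<bar>X$1$1\<bar> + \<bar>X$1$2\<bar> + \<bar>X$2$1\<bar> + \<bar>X$2$2\<bar>"
  define T where "T n = (1 / fact n) *\<^sub>R matpow (t *\<^sub>R X) n" for n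
  have T_nth: "T n $ a $ c = (matpow X n $ a $ c / fact n) * t^n" for n a c
    unfolding T_def matpow_scaleR by simp
  have T_bound: "\<bar>T n $ a $ c\<bar> \<le> (\<bar>t\<bar> * ?K)^n / fact n" for n a c
  proof -
    have "\<bar>T n $ a $ c\<bar> = \<bar>matpow X n $ a $ c\<bar> * \<bar>t\<bar>^n / fact n"
      unfolding T_nth by (simp add: abs_mult power_abs)
    also have "\<dots> \<le> ?K^n * \<bar>t\<bar>^n / fact n"
      by (intro divide_right_mono mult_right_mono matpow_nth_bound) auto
    finally show ?thesis by (simp add: power_mult_distrib mult.commute)
  qed
  have "summable (\<lambda>n. 4 * ((\<bar>t\<bar> * ?K)^n / fact n))"
    using summable_mult[OF summable_exp[of "\<bar>t\<bar> * ?K"], of 4] by (simp add: divide_inverse mult_ac)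
  moreover have "norm (T n) \<le> 4 * ((\<bar>t\<bar> * ?K)^n / fact n)" for n
    using norm_mat2_le[of "T n"] T_bound[of n 1 1] T_bound[of n 1 2] T_bound[of n 2 1] T_bound[of n 2 2]
    by linarith
  ultimately have "summable T"
    by (rule summable_comparison_test'[where N = 0])
  have "bounded_linear (\<lambda>M::mat2. M $ i $ j)"
    using bounded_linear_compose[OF bounded_linear_vec_nth[of j] bounded_linear_vec_nth[of i]] by simp
  then have "mexp (t *\<^sub>R X) $ i $ j = (\<Sum>n. T n $ i $ j)"
    unfolding mexp_def T_def[symmetric] using bounded_linear.suminf[OF _ \<open>summable T\<close>] by blast
  then show ?thesis unfolding T_nth .
qed

lemma mexp_scaleR_at_0:
  fixes X :: mat2
  shows "((\<lambda>t. mexp (t *\<^sub>R X)) has_vector_derivative X) (at 0)" and "mexp (0 *\<^sub>R X) = mat 1"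
proof -
  let ?K = "\<bar>X$1$1\<bar> + \<bar>X$1$2\<bar> + \<bar>X$2$1\<bar> + \<bar>X$2$2\<bar>"
  define c where "c i j n = matpow X n $ i $ j / fact n" for i j n
  have summable: "summable (\<lambda>n. c i j n * y^n)" for i j y
  proof (rule summable_comparison_test'[OF summable_exp[of "\<bar>y\<bar> * ?K"]])
    fix n :: nat
    have "norm (c i j n * y^n) = \<bar>matpow X n $ i $ j\<bar> * \<bar>y\<bar>^n / fact n"
      unfolding c_def by (simp add: abs_mult power_abs)
    also have "\<dots> \<le> ?K^n * \<bar>y\<bar>^n / fact n"
      by (intro divide_right_mono mult_right_mono matpow_nth_bound) auto
    finally show "norm (c i j n * y^n) \<le> inverse (fact n) * (\<bar>y\<bar> * ?K)^n"
      by (simp add: power_mult_distrib divide_inverse mult_ac)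
  qed
  have nth: "(\<lambda>t. mexp (t *\<^sub>R X) $ i $ j) = (\<lambda>t. \<Sum>n. c i j n * t^n)" for i j
    unfolding mexp_scaleR_nth c_def ..
  have "((\<lambda>t. \<Sum>n. c i j n * t^n) has_real_derivative (\<Sum>n. diffs (c i j) n * 0^n)) (at 0)" for i j
    by (rule termdiffs_strong_converges_everywhere[OF summable])
  moreover have "(\<Sum>n. diffs (c i j) n * 0^n) = X $ i $ j" for i j
    by (simp only: powser_zero) (simp add: diffs_def c_def matrix_mul_rid)
  ultimately show "((\<lambda>t. mexp (t *\<^sub>R X)) has_vector_derivative X) (at 0)"
    by (intro has_vector_derivative_matI) (simp add: nth)
  show "mexp (0 *\<^sub>R X) = mat 1"
    by (simp only: vec_eq_iff mexp_scaleR_nth powser_zero) simp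
qed

lemma matrix_inv_has_vector_derivative_at_0:
  fixes M :: "real \<Rightarrow> mat2"
  assumes dM: "(M has_vector_derivative X) (at 0)" and M0: "M 0 = mat 1"
  shows "((\<lambda>t. matrix_inv (M t)) has_vector_derivative - X) (at 0)"
proof -
  note dMe = has_real_derivative_mat_nth[OF dM]
  have M0e: "M 0 $ 1 $ 1 = 1" "M 0 $ 1 $ 2 = 0" "M 0 $ 2 $ 1 = 0" "M 0 $ 2 $ 2 = 1"
    by (simp_all add: M0 mat_def)
  define d where "d t = det (M t)" for t
  have d_deriv: "(d has_real_derivative X$1$1 + X$2$2) (at 0)"
    unfolding d_def[abs_def] det_2 by (rule derivative_eq_intros dMe refl)+ (simp add: M0e)
  have "d 0 = 1" by (simp add: d_def M0)
  then obtain r where "r > 0" and r: "\<And>t. dist 0 t < r \<Longrightarrow> d t \<noteq> 0"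
    using continuous_at_avoid[of 0 d 0] DERIV_isCont[OF d_deriv] by (auto simp: isCont_def continuous_at)
  have ev: "eventually (\<lambda>t. t \<in> UNIV \<longrightarrow> (1 / d t) *\<^sub>R adj2 (M t) = matrix_inv (M t)) (nhds 0)"
    unfolding eventually_nhds_metric
    using \<open>r > 0\<close> r by (intro exI[of _ r]) (auto simp: dist_commute d_def matrix_inv_2)
  moreover have "((\<lambda>t. (1 / d t) *\<^sub>R adj2 (M t)) has_vector_derivative - X) (at 0)"
  proof (rule has_vector_derivative_matI)
    fix i j
    show "((\<lambda>t. ((1 / d t) *\<^sub>R adj2 (M t)) $ i $ j) has_real_derivative (- X) $ i $ j) (at 0)"
      using exhaust_2[of i] exhaust_2[of j]
      by (auto simp: \<open>d 0 = 1\<close> M0e intro!: derivative_eq_intros dMe d_deriv)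
  qed
  ultimately show ?thesis
    using has_vector_derivative_cong_ev[OF ev] eventually_nhds_x_imp_x[OF ev] by simp
qed

text \<open>The derivative at t = 0 of the tensor part of t \<mapsto> act (exp (t X)) for traceless X.\<close>
definition lie_act :: "ten3 \<Rightarrow> mat2 \<Rightarrow> ten3" where
  "lie_act C X = (\<chi> i j k. - (\<Sum>a\<in>UNIV. C$a$j$k * X$a$i + C$i$a$k * X$a$j + C$i$j$a * X$a$k))"

lemma act_mexp_has_vector_derivative:
  assumes J: "det J = 1" and X: "trace X = 0"
  shows "((\<lambda>t. act (mexp (t *\<^sub>R X)) (J, C)) has_vector_derivative (X ** J - J ** X, lie_act C X)) (at 0)"
proof -
  define M where "M t = mexp (t *\<^sub>R X)" for t
  define Q where "Q t = matrix_inv (M t)" for t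
  have dM: "(M has_vector_derivative X) (at 0)" and M0: "M 0 = mat 1"
    unfolding M_def[abs_def] using mexp_scaleR_at_0[of X] by simp_all
  have dQ: "(Q has_vector_derivative - X) (at 0)"
    unfolding Q_def[abs_def] by (rule matrix_inv_has_vector_derivative_at_0[OF dM M0])
  have Q0: "Q 0 = mat 1"
    unfolding Q_def M0 by (rule matrix_inv_unique) (simp_all add: matrix_mul_lid)
  note dMe = has_real_derivative_mat_nth[OF dM] and dQe = has_real_derivative_mat_nth[OF dQ]
  have X22: "X$2$2 = - X$1$1" using X by (simp add: trace_def sum_2)
  have detM0: "det (M 0) = 1"
    by (simp add: M0 det_I)
  have ddet: "((\<lambda>t. det (M t)) has_real_derivative 0) (at 0)"
    unfolding det_2 by (rule derivative_eq_intros dMe refl)+ (simp add: M0 mat_def X22)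
  have "((\<lambda>t. (M t ** J ** Q t, det (M t) *\<^sub>R pullback C (Q t))) has_vector_derivative
      (X ** J - J ** X, lie_act C X)) (at 0)"
  proof (rule has_vector_derivative_Pair)
    show "((\<lambda>t. M t ** J ** Q t) has_vector_derivative X ** J - J ** X) (at 0)"
    proof (rule has_vector_derivative_matI)
      fix i j
      show "((\<lambda>t. (M t ** J ** Q t) $ i $ j) has_real_derivative (X ** J - J ** X) $ i $ j) (at 0)"
        unfolding matrix_matrix_mult_def vec_lambda_beta sum_2
        apply (rule derivative_eq_intros dMe dQe refl)+
        using exhaust_2[of i] exhaust_2[of j]
        by (auto simp: M0 Q0 mat_def matrix_matrix_mult_def sum_2 algebra_simps)
    qed
    show "((\<lambda>t. det (M t) *\<^sub>R pullback C (Q t)) has_vector_derivative lie_act C X) (at 0)"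
    proof (rule has_vector_derivative_tenI)
      fix i j k
      show "((\<lambda>t. (det (M t) *\<^sub>R pullback C (Q t)) $ i $ j $ k) has_real_derivative lie_act C X $ i $ j $ k) (at 0)"
        unfolding pullback_def trilin_def matrix_vector_mult_def vector_scaleR_component real_scaleR_def vec_lambda_beta sum_2
        apply (rule derivative_eq_intros ddet dQe refl)+
        using exhaust_2[of i] exhaust_2[of j] exhaust_2[of k]
        by (auto simp: detM0 Q0 mat_def lie_act_def sum_2 algebra_simps)
    qed
  qed
  then show ?thesis
    by (simp add: act_eq[OF J] M_def Q_def)
qed

section \<open>The moment map equation\<close>

text \<open>The linearizations, along a tangent vector (Jd, Cd), of the equations in B0_entries.\<close>
definition B0_tangent :: "mat2 \<Rightarrow> ten3 \<Rightarrow> mat2 \<Rightarrow> ten3 \<Rightarrow> bool" where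
  "B0_tangent J C Jd Cd \<longleftrightarrow>
     Jd$2$2 = - Jd$1$1 \<and> 2 * J$1$1 * Jd$1$1 + Jd$1$2 * J$2$1 + J$1$2 * Jd$2$1 = 0 \<and>
     Cd$1$2$1 = Cd$1$1$2 \<and> Cd$2$1$1 = Cd$1$1$2 \<and> Cd$2$1$2 = Cd$1$2$2 \<and> Cd$2$2$1 = Cd$1$2$2 \<and>
     Jd$2$1 * C$1$2$2 + J$2$1 * Cd$1$2$2
       = Jd$1$2 * C$1$1$1 + J$1$2 * Cd$1$1$1 - 2 * Jd$1$1 * C$1$1$2 - 2 * J$1$1 * Cd$1$1$2 \<and>
     Jd$2$1 * C$2$2$2 + J$2$1 * Cd$2$2$2
       = Jd$1$2 * C$1$1$2 + J$1$2 * Cd$1$1$2 - 2 * Jd$1$1 * C$1$2$2 - 2 * J$1$1 * Cd$1$2$2"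

definition normA_deriv :: "mat2 \<Rightarrow> ten3 \<Rightarrow> mat2 \<Rightarrow> ten3 \<Rightarrow> real" where
  "normA_deriv J C Jd Cd =
     (2 * C$1$1$1 * Cd$1$1$1 + 2 * (J$1$1 * C$1$1$1 + J$2$1 * C$1$1$2) *
       (Jd$1$1 * C$1$1$1 + J$1$1 * Cd$1$1$1 + Jd$2$1 * C$1$1$2 + J$2$1 * Cd$1$1$2)) / (J$2$1)^3
     - 3 * ((C$1$1$1)^2 + (J$1$1 * C$1$1$1 + J$2$1 * C$1$1$2)^2) * Jd$2$1 / (J$2$1)^4"

lemma A0_scaleR: "(\<And>r Y. F (r *\<^sub>R Y) = r *\<^sub>R F Y) \<Longrightarrow> A0 F (r *\<^sub>R Y) = r *\<^sub>R A0 F Y"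
  by (simp add: A0_def Atr_def trace_def algebra_simps sum_2)

lemma Atr_scaleR: "(\<And>r Y. F (r *\<^sub>R Y) = r *\<^sub>R F Y) \<Longrightarrow> Atr F (r *\<^sub>R Y) = r *\<^sub>R Atr F Y"
  by (simp add: Atr_def trace_def algebra_simps sum_2)

lemma trace_A0_mult: "trace (A0 F Y ** A0 G Y) = trace (F Y ** G Y) - trace (F Y) * trace (G Y) / 2"
  by (simp add: A0_def Atr_def trace_def matrix_matrix_mult_def sum_2 mat_def field_simps)

lemma trace_Atr_mult: "trace (Atr F Y ** Atr G Y) = trace (F Y) * trace (G Y) / 2"
  by (simp add: Atr_def trace_def matrix_matrix_mult_def sum_2 mat_def field_simps)

lemma B0_tangent_solved:
  assumes JC: "(J, C) \<in> B0" and tangent: "B0_tangent J C Jd Cd"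
  defines "e \<equiv> 1 / J$2$1"
  shows "Jd$2$2 = - Jd$1$1"
    "Cd$1$2$1 = Cd$1$1$2" "Cd$2$1$1 = Cd$1$1$2" "Cd$2$1$2 = Cd$1$2$2" "Cd$2$2$1 = Cd$1$2$2"
    "Jd$1$2 = ((J$1$1)^2 + 1) * Jd$2$1 * e^2 - 2 * J$1$1 * Jd$1$1 * e"
    "Cd$1$2$2 = -2 * J$1$1 * C$1$1$1 * Jd$1$1 * e^2 + 2 * ((J$1$1)^2+1) * C$1$1$1 * Jd$2$1 * e^3
      - ((J$1$1)^2+1) * Cd$1$1$1 * e^2 - 2 * C$1$1$2 * Jd$1$1 * e - 2 * J$1$1 * Cd$1$1$2 * e
      + 2 * J$1$1 * C$1$1$2 * Jd$2$1 * e^2"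
    "Cd$2$2$2 = 6 * J$1$1 * C$1$1$2 * Jd$1$1 * e^2 - 6 * (J$1$1)^2 * C$1$1$2 * Jd$2$1 * e^3
      + 2 * C$1$1$2 * Jd$2$1 * e^3 + 3 * (J$1$1)^2 * Cd$1$1$2 * e^2 - Cd$1$1$2 * e^2
      + 6 * (J$1$1)^2 * C$1$1$1 * Jd$1$1 * e^3 + 2 * C$1$1$1 * Jd$1$1 * e^3
      - 6 * (J$1$1)^3 * C$1$1$1 * Jd$2$1 * e^4 - 6 * J$1$1 * C$1$1$1 * Jd$2$1 * e^4
      + 2 * (J$1$1)^3 * Cd$1$1$1 * e^3 + 2 * J$1$1 * Cd$1$1$1 * e^3"
proof -
  note S = B0_entries_solved[OF JC, folded e_def]
  note T = tangent[unfolded B0_tangent_def]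
  show "Jd$2$2 = - Jd$1$1"
    "Cd$1$2$1 = Cd$1$1$2" "Cd$2$1$1 = Cd$1$1$2" "Cd$2$1$2 = Cd$1$2$2" "Cd$2$2$1 = Cd$1$2$2"
    using T by simp_all
  show Jd12: "Jd$1$2 = ((J$1$1)^2 + 1) * Jd$2$1 * e^2 - 2 * J$1$1 * Jd$1$1 * e"
    using S(1,2) T by (elim conjE) algebra
  show Cd122: "Cd$1$2$2 = -2 * J$1$1 * C$1$1$1 * Jd$1$1 * e^2 + 2 * ((J$1$1)^2+1) * C$1$1$1 * Jd$2$1 * e^3
      - ((J$1$1)^2+1) * Cd$1$1$1 * e^2 - 2 * C$1$1$2 * Jd$1$1 * e - 2 * J$1$1 * Cd$1$1$2 * e
      + 2 * J$1$1 * C$1$1$2 * Jd$2$1 * e^2"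
    using S(1-3) T Jd12 by (elim conjE) algebra
  show "Cd$2$2$2 = 6 * J$1$1 * C$1$1$2 * Jd$1$1 * e^2 - 6 * (J$1$1)^2 * C$1$1$2 * Jd$2$1 * e^3
      + 2 * C$1$1$2 * Jd$2$1 * e^3 + 3 * (J$1$1)^2 * Cd$1$1$2 * e^2 - Cd$1$1$2 * e^2
      + 6 * (J$1$1)^2 * C$1$1$1 * Jd$1$1 * e^3 + 2 * C$1$1$1 * Jd$1$1 * e^3
      - 6 * (J$1$1)^3 * C$1$1$1 * Jd$2$1 * e^4 - 6 * J$1$1 * C$1$1$1 * Jd$2$1 * e^4
      + 2 * (J$1$1)^3 * Cd$1$1$1 * e^3 + 2 * J$1$1 * Cd$1$1$1 * e^3"
    using S T Jd12 Cd122 by (elim conjE) algebra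
qed

text \<open>Up to the factor f', the pick-form part of omega(V_X, v), where V_X = ([X,J], lie_act C X).\<close>
lemma pick_pairing_identity:
  assumes JC: "(J, C) \<in> B0" and tangent: "B0_tangent J C Jd Cd" and X: "X$2$2 = - X$1$1"
  defines "V \<equiv> pick J (lie_act C X)" and "W \<equiv> \<lambda>Y. - (pick J Cd Y ** J) - (pick J C Y ** Jd)"
  shows "1/3 * ipA J (A0 V) (A0 W) - 1/6 * ipA J (Atr V) (Atr W) = - normA_deriv J C Jd Cd * trace (J ** X)"
proof -
  define e where "e = 1 / J$2$1"
  note B = B0_entries[OF JC] and S = B0_entries_solved[OF JC, folded e_def]
    and T = B0_tangent_solved[OF JC tangent, folded e_def]
  have div: "t / J$2$1 = t * e" "t / (J$2$1)^3 = t * e^3" "t / (J$2$1)^4 = t * e^4" for t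
    using B(3) by (simp_all add: e_def field_simps)
  have hom: "V (r *\<^sub>R Y) = r *\<^sub>R V Y" "W (r *\<^sub>R Y) = r *\<^sub>R W Y" for r Y
    by (simp_all add: V_def W_def pick_scaleR vec_eq_iff matrix_matrix_mult_def sum_2 algebra_simps)
  have ip: "ipA J (A0 V) (A0 W) = (trace (A0 V (b 1) ** A0 W (b 1)) + trace (A0 V (J *v b 1) ** A0 W (J *v b 1))) / J$2$1"
    "ipA J (Atr V) (Atr W) = (trace (Atr V (b 1) ** Atr W (b 1)) + trace (Atr V (J *v b 1) ** Atr W (J *v b 1))) / J$2$1"
    by (rule ipA_homogeneous, simp_all add: B(3) A0_scaleR Atr_scaleR hom)+
  show ?thesis
    unfolding V_def[symmetric] W_def[symmetric] ip trace_A0_mult trace_Atr_mult unfolding V_def W_def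
    apply (simp only: normA_deriv_def pick_def gram_nth lie_act_def
        transpose_def adj2_nth vec_lambda_beta sum_2 b_nth matrix_matrix_mult_def
        matrix_vector_mult_def trace_def vector_minus_component vector_uminus_component
        vector_scaleR_component real_scaleR_def B(1,4-7) S(2-4) T X div)
    using S(1) by algebra
qed

lemma DERIV_vanishing_function:
  "(g has_real_derivative D) (at 0) \<Longrightarrow> (\<And>t. g t = 0) \<Longrightarrow> D = 0"
  using DERIV_unique[of g D 0 0] by (metis DERIV_const ext)

lemma B0_curve_tangent:
  assumes B: "\<And>t. \<gamma> t \<in> B0" and "\<gamma> 0 = (J, C)" and d: "(\<gamma> has_vector_derivative (Jd, Cd)) (at 0)"
  shows "B0_tangent J C Jd Cd"
proof -
  define Jt where "Jt t = fst (\<gamma> t)" for t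
  define Ct where "Ct t = snd (\<gamma> t)" for t
  have B: "(Jt t, Ct t) \<in> B0" for t using B[of t] by (simp add: Jt_def Ct_def)
  have J0: "Jt 0 = J" and C0: "Ct 0 = C" using assms(2) by (simp_all add: Jt_def Ct_def)
  have dJ: "((\<lambda>t. Jt t $ i $ j) has_real_derivative Jd $ i $ j) (at 0)" for i j
    unfolding Jt_def using d by (rule has_real_derivative_fst_nth)
  have dC: "((\<lambda>t. Ct t $ i $ j $ k) has_real_derivative Cd $ i $ j $ k) (at 0)" for i j k
    unfolding Ct_def using d by (rule has_real_derivative_snd_nth)
  note E = B0_entries[OF B]
  have Cd_eq: "Cd$i$j$k = Cd$p$q$r" if "\<And>t. Ct t $i$j$k = Ct t $p$q$r" for i j k p q r
  proof -
    have "Cd$i$j$k - Cd$p$q$r = 0"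
      by (rule DERIV_vanishing_function[where g = "\<lambda>t. Ct t $i$j$k - Ct t $p$q$r"])
        (rule derivative_eq_intros dC refl | simp add: that)+
    then show ?thesis by simp
  qed
  have "Jd$2$2 + Jd$1$1 = 0"
    by (rule DERIV_vanishing_function[where g = "\<lambda>t. Jt t $ 2 $ 2 + Jt t $ 1 $ 1"])
      (rule derivative_eq_intros dJ refl | simp add: E)+
  moreover have "2 * J$1$1 * Jd$1$1 + Jd$1$2 * J$2$1 + J$1$2 * Jd$2$1 = 0"
    by (rule DERIV_vanishing_function[where g = "\<lambda>t. (Jt t $ 1 $ 1)^2 + Jt t $ 1 $ 2 * Jt t $ 2 $ 1 + 1"])
      (rule derivative_eq_intros dJ refl | simp add: E J0 algebra_simps)+
  moreover have "Cd$1$2$1 = Cd$1$1$2" "Cd$2$1$1 = Cd$1$1$2" "Cd$2$1$2 = Cd$1$2$2" "Cd$2$2$1 = Cd$1$2$2"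
    by (rule Cd_eq, simp add: E)+
  moreover have "Jd$2$1 * C$1$2$2 + J$2$1 * Cd$1$2$2
      - (Jd$1$2 * C$1$1$1 + J$1$2 * Cd$1$1$1 - 2 * Jd$1$1 * C$1$1$2 - 2 * J$1$1 * Cd$1$1$2) = 0"
    by (rule DERIV_vanishing_function[where
          g = "\<lambda>t. Jt t $2$1 * Ct t $1$2$2 - (Jt t $1$2 * Ct t $1$1$1 - 2 * Jt t $1$1 * Ct t $1$1$2)"])
      (rule derivative_eq_intros dJ dC refl | simp add: E J0 C0 algebra_simps)+
  moreover have "Jd$2$1 * C$2$2$2 + J$2$1 * Cd$2$2$2
      - (Jd$1$2 * C$1$1$2 + J$1$2 * Cd$1$1$2 - 2 * Jd$1$1 * C$1$2$2 - 2 * J$1$1 * Cd$1$2$2) = 0"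
    by (rule DERIV_vanishing_function[where
          g = "\<lambda>t. Jt t $2$1 * Ct t $2$2$2 - (Jt t $1$2 * Ct t $1$1$2 - 2 * Jt t $1$1 * Ct t $1$2$2)"])
      (rule derivative_eq_intros dJ dC refl | simp add: E J0 C0 algebra_simps)+
  ultimately show ?thesis
    unfolding B0_tangent_def by (simp add: algebra_simps)
qed

lemma normA_curve_has_derivative:
  assumes d: "(\<gamma> has_vector_derivative (Jd, Cd)) (at 0)" and "\<gamma> 0 = (J, C)" and "J$2$1 \<noteq> 0"
  shows "((\<lambda>t. normA (fst (\<gamma> t)) (snd (\<gamma> t))) has_real_derivative normA_deriv J C Jd Cd) (at 0)"
  unfolding normA_def normA_deriv_def
  by (rule derivative_eq_intros has_real_derivative_fst_nth[OF d] has_real_derivative_snd_nth[OF d] refl)+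
    (use assms(2,3) in \<open>simp_all add: field_simps\<close>)

lemma omega_fundamental_field:
  assumes B: "(J, C) \<in> B0" and T: "B0_tangent J C Jd Cd" and X: "trace X = 0"
  shows "omega f f' (J, C) (X ** J - J ** X, lie_act C X) (Jd, Cd)
    = (1 - f (normA J C)) * trace (Jd ** X) - f' (normA J C) * normA_deriv J C Jd Cd * trace (J ** X)"
proof -
  note E = B0_entries[OF B]
  let ?N = "normA J C" and ?V = "pick J (lie_act C X)"
    and ?W = "\<lambda>Y. - (pick J Cd Y ** J) - (pick J C Y ** Jd)"
  have X22: "X$2$2 = - X$1$1" using X by (simp add: trace_def sum_2)
  have pick: "pickA J = pick J" using pickA_eq_pick[OF B0_det[OF B]] by (rule ext)
  have "omega f f' (J, C) (X ** J - J ** X, lie_act C X) (Jd, Cd)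
      = (1 - f ?N) * ipJ (X ** J - J ** X) (- (J ** Jd))
        + f' ?N * (1/3 * ipA J (A0 ?V) (A0 ?W) - 1/6 * ipA J (Atr ?V) (Atr ?W))"
    using norm0sq_pickA[OF B]
    by (simp add: omega_def gmet_def Icx_def Let_def pick algebra_simps)
  also have "ipJ (X ** J - J ** X) (- (J ** Jd)) = trace (Jd ** X)"
    using E(1,2) T X22 unfolding ipJ_def B0_tangent_def
    by (simp add: trace_def matrix_matrix_mult_def sum_2) algebra
  finally show ?thesis
    unfolding pick_pairing_identity[OF B T X22] by simp
qed

lemma mu_curve_has_derivative:
  assumes B: "\<And>t. \<gamma> t \<in> B0" and \<gamma>0: "\<gamma> 0 = (J, C)" and d: "(\<gamma> has_vector_derivative (Jd, Cd)) (at 0)"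
    and f: "(f has_real_derivative f' (normA J C)) (at (normA J C))"
  shows "((\<lambda>t. mu f (\<gamma> t) X) has_real_derivative
    (1 - f (normA J C)) * trace (Jd ** X) - f' (normA J C) * normA_deriv J C Jd Cd * trace (J ** X)) (at 0)"
proof -
  have JC: "(J, C) \<in> B0" using B[of 0] \<gamma>0 by simp
  have mu: "(\<lambda>t. mu f (\<gamma> t) X) = (\<lambda>t. (1 - f (normA (fst (\<gamma> t)) (snd (\<gamma> t)))) * trace (fst (\<gamma> t) ** X))"
    using mu_B0 B by (metis prod.collapse)
  have "((\<lambda>t. f (normA (fst (\<gamma> t)) (snd (\<gamma> t)))) has_real_derivative f' (normA J C) * normA_deriv J C Jd Cd) (at 0)"
    using DERIV_chain2[OF _ normA_curve_has_derivative[OF d \<gamma>0]] f B0_entries(3)[OF JC] \<gamma>0 by simp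
  moreover have "((\<lambda>t. trace (fst (\<gamma> t) ** X)) has_real_derivative trace (Jd ** X)) (at 0)"
    unfolding trace_def matrix_matrix_mult_def vec_lambda_beta sum_2
    by (rule derivative_eq_intros has_real_derivative_fst_nth[OF d] refl)+ simp
  ultimately have "((\<lambda>t. (1 - f (normA (fst (\<gamma> t)) (snd (\<gamma> t)))) * trace (fst (\<gamma> t) ** X))
      has_real_derivative (0 - f' (normA J C) * normA_deriv J C Jd Cd) * trace (fst (\<gamma> 0) ** X)
        + trace (Jd ** X) * (1 - f (normA (fst (\<gamma> 0)) (snd (\<gamma> 0))))) (at 0)"
    by (intro DERIV_mult DERIV_diff DERIV_const)
  then show ?thesis
    unfolding mu by (simp add: \<gamma>0 algebra_simps)
qed

lemma mu_hamiltonian: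
  assumes f: "\<And>t. t > 0 \<Longrightarrow> (f has_real_derivative f' t) (at t)"
    and X: "X \<in> sl2" and p: "p \<in> B0"
  shows "((\<lambda>t. act (mexp (t *\<^sub>R X)) p) has_vector_derivative (X ** fst p - fst p ** X, lie_act (snd p) X)) (at 0)"
    and "\<And>\<gamma> v. (\<forall>t. \<gamma> t \<in> B0) \<Longrightarrow> \<gamma> 0 = p \<Longrightarrow> (\<gamma> has_vector_derivative v) (at 0) \<Longrightarrow>
      ((\<lambda>t. mu f (\<gamma> t) X) has_real_derivative omega f f' p (X ** fst p - fst p ** X, lie_act (snd p) X) v) (at 0)"
proof -
  obtain J C where p: "p = (J, C)" by (cases p)
  have B: "(J, C) \<in> B0" using \<open>p \<in> B0\<close> p by simp
  have tr: "trace X = 0" using X by (simp add: sl2_def)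
  show "((\<lambda>t. act (mexp (t *\<^sub>R X)) p) has_vector_derivative (X ** fst p - fst p ** X, lie_act (snd p) X)) (at 0)"
    using act_mexp_has_vector_derivative[OF B0_det[OF B] tr] by (simp add: p)
  fix \<gamma> v assume \<gamma>: "\<forall>t. \<gamma> t \<in> B0" "\<gamma> 0 = p" "(\<gamma> has_vector_derivative v) (at 0)"
  obtain Jd Cd where v: "v = (Jd, Cd)" by (cases v)
  have "B0_tangent J C Jd Cd"
    using B0_curve_tangent[of \<gamma>] \<gamma> by (simp add: p v)
  then show "((\<lambda>t. mu f (\<gamma> t) X) has_real_derivative omega f f' p (X ** fst p - fst p ** X, lie_act (snd p) X) v) (at 0)"
    using mu_curve_has_derivative[of \<gamma> J C Jd Cd f f'] f[OF normA_pos[OF B]] \<gamma>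
    by (simp add: p v omega_fundamental_field[OF B _ tr])
qed

theorem theoremC:
  fixes f f' :: "real \<Rightarrow> real"
  assumes smooth: "\<exists>F :: nat \<Rightarrow> real \<Rightarrow> real. F 0 = f \<and> F 1 = f' \<and>
                     (\<forall>k t. t \<ge> 0 \<longrightarrow> (F k has_real_derivative F (Suc k) t) (at t within {0..}))"
    and nonpos: "\<forall>t \<ge> 0. f t \<le> 0"
    and decr: "\<forall>t \<ge> 0. f' t < 0"
    and lim: "filterlim f at_bot at_top"
  shows "(\<forall>P \<in> SL2. \<forall>p \<in> B0. act P p \<in> B0 \<and>
            (\<forall>X \<in> sl2. mu f (act P p) X = mu f p (matrix_inv P ** X ** P)))
       \<and> (\<forall>X \<in> sl2. \<forall>p \<in> B0. \<exists>V.
            ((\<lambda>t. act (mexp (t *\<^sub>R X)) p) has_vector_derivative V) (at 0) \<and>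
            (\<forall>\<gamma> v. (\<forall>t. \<gamma> t \<in> B0) \<longrightarrow> \<gamma> 0 = p \<longrightarrow> (\<gamma> has_vector_derivative v) (at 0) \<longrightarrow>
               ((\<lambda>t. mu f (\<gamma> t) X) has_real_derivative omega f f' p V v) (at 0)))"
proof -
  obtain F :: "nat \<Rightarrow> real \<Rightarrow> real" where F: "F 0 = f" "F 1 = f'"
    "\<And>k t. t \<ge> 0 \<Longrightarrow> (F k has_real_derivative F (Suc k) t) (at t within {0..})"
    using smooth by blast
  have "(f has_real_derivative f' t) (at t)" if "t > 0" for t
  proof -
    have "(f has_real_derivative f' t) (at t within {0..})"
      using F(3)[of t 0] that F(1,2) by simp
    then have "(f has_real_derivative f' t) (at t within {0<..})"
      by (rule has_field_derivative_subset) auto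
    then show ?thesis
      using at_within_open[of t "{0<..}"] that by simp
  qed
  then show ?thesis
    using mu_equivariant mu_hamiltonian by blast
qed

end
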